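(* Let $G$ be a strongly connected digraph and $H$ its undirectization. If $H$ has at least two cycles with distinct vertex sets, then $G$ has at least two directed cycles with distinct vertex sets.
   Context: A digraph $G=(V,E)$, no loops or multiple edges. The undirectization $H$ is the undirected simple graph with edge $\{i,j\}$ whenever $(i,j)\in E$ or $(j,i)\in E$. A cycle of $H$ is a closed path of length $\ge3$ up to cyclic permutations and reversal; a directed cycle of $G$ is a closed directed path $(i_0,\dots,i_\ell=i_0)$ with $i_0,\dots,i_{\ell-1}$ distinct and $\ell\ge3$, up to cyclic permutations. The vertex set of a (directed) cycle is the set of its vertices. $G$ is strongly connected if any vertex can be reached from any other by a directed walk. *)

theory Defs
  imports Main
begin

definition digraph :: "'a set \<Rightarrow> ('a \<times> 'a) set \<Rightarrow> bool" where
  "digraph V E \<longleftrightarrow> finite V \<and> E \<subseteq> V \<times> V \<and> (\<forall>(i, j) \<in> E. i \<noteq> j)"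

definition und_adj :: "('a \<times> 'a) set \<Rightarrow> 'a \<Rightarrow> 'a \<Rightarrow> bool" where
  "und_adj E i j \<longleftrightarrow> (i, j) \<in> E \<or> (j, i) \<in> E"

definition dir_adj :: "('a \<times> 'a) set \<Rightarrow> 'a \<Rightarrow> 'a \<Rightarrow> bool" where
  "dir_adj E i j \<longleftrightarrow> (i, j) \<in> E"

definition cycle_list :: "('a \<Rightarrow> 'a \<Rightarrow> bool) \<Rightarrow> 'a list \<Rightarrow> bool" where
  "cycle_list R xs \<longleftrightarrow> length xs \<ge> 3 \<and> distinct xs \<and>
     (\<forall>k < length xs. R (xs ! k) (xs ! ((k + 1) mod length xs)))"

definition strongly_connected :: "'a set \<Rightarrow> ('a \<times> 'a) set \<Rightarrow> bool" where
  "strongly_connected V E \<longleftrightarrow> (\<forall>u \<in> V. \<forall>v \<in> V. (u, v) \<in> E\<^sup>*)"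

end

theory Submission
  imports Defs "HOL-Library.Transitive_Closure_Table"
begin

text \<open>
  Suppose all directed cycles of \<open>G\<close> had one vertex set \<open>S\<close>. A directed cycle \<open>Z\<close> exists: an
  undirected cycle is either directed or contains a one-way arc, and by strong connectivity
  every one-way arc lies on a directed cycle. For the same reason every arc with an endpoint
  outside \<open>S\<close> is two-way. Now take an undirected cycle \<open>C\<close> whose vertex set is not \<open>S\<close>.
  If \<open>C\<close> passes through \<open>w \<notin> S\<close>, with neighbours \<open>v\<close> and \<open>a\<close> on \<open>C\<close>, walk along \<open>C\<close> from
  \<open>v\<close> to \<open>a\<close>, replacing each one-way step (which lies inside \<open>S\<close>) by a detour along \<open>Z\<close>; then
  step to \<open>w\<close>. This is a directed path from \<open>v\<close> to \<open>w\<close> avoiding the arc \<open>(v, w)\<close>, so together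
  with \<open>(w, v)\<close> it contains a directed cycle through \<open>w\<close>. If \<open>C\<close> stays inside \<open>S\<close>, it cannot
  use only edges of \<open>Z\<close>, since the only cycle of a cycle graph is the whole cycle; so some edge
  of \<open>C\<close> is a chord of \<open>Z\<close>, and the chord followed by the path along \<open>Z\<close> back to its tail is a
  shorter directed cycle.
\<close>

lemma successively_take: "successively P xs \<Longrightarrow> successively P (take k xs)"
  by (simp add: successively_conv_nth)

lemma successively_rtrancl:
  "successively (\<lambda>a b. (a, b) \<in> R\<^sup>*) xs \<Longrightarrow> y \<in> set xs \<Longrightarrow> (hd xs, y) \<in> R\<^sup>*"
  by (induction xs) (auto simp: successively_Cons intro: rtrancl_trans)

lemma rtrancl_path_successively:
  "rtrancl_path r x xs y \<Longrightarrow> successively r (x # xs) \<and> last (x # xs) = y"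
  by (induction rule: rtrancl_path.induct) (auto simp: successively_Cons elim: rtrancl_path.cases)

lemma hd_neq_last: "distinct xs \<Longrightarrow> 2 \<le> length xs \<Longrightarrow> hd xs \<noteq> last xs"
  by (cases xs) auto

lemma add_one_mod_eq_iff:
  fixes i j n :: nat
  assumes "i < n" "j < n"
  shows "(i + 1) mod n = j \<longleftrightarrow> i = (j + n - 1) mod n"
proof (cases "j = 0")
  case True
  then show ?thesis using assms by (cases "Suc i = n") auto
next
  case False
  then have "(j + n - 1) mod n = j - 1"
    using assms by (simp add: mod_if)
  then show ?thesis using assms False by (cases "Suc i = n") auto
qed

lemma cycle_list_iff_successively:
  "cycle_list R xs \<longleftrightarrow>
     3 \<le> length xs \<and> distinct xs \<and> successively R xs \<and> R (last xs) (hd xs)"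
proof (cases "xs = []")
  case False
  let ?n = "length xs"
  have "(\<forall>k<?n. R (xs ! k) (xs ! ((k + 1) mod ?n))) \<longleftrightarrow>
        (\<forall>k. Suc k < ?n \<longrightarrow> R (xs ! k) (xs ! Suc k)) \<and> R (xs ! (?n - 1)) (xs ! 0)"
  proof (intro iffI conjI allI impI)
    assume all: "\<forall>k<?n. R (xs ! k) (xs ! ((k + 1) mod ?n))"
    show "R (xs ! k) (xs ! Suc k)" if "Suc k < ?n" for k
      using all[rule_format, of k] that by simp
    show "R (xs ! (?n - 1)) (xs ! 0)"
      using all[rule_format, of "?n - 1"] False by simp
  next
    fix k
    assume "(\<forall>k. Suc k < ?n \<longrightarrow> R (xs ! k) (xs ! Suc k)) \<and> R (xs ! (?n - 1)) (xs ! 0)"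
      and "k < ?n"
    then show "R (xs ! k) (xs ! ((k + 1) mod ?n))"
    proof (cases "Suc k < ?n")
      case False
      then have "Suc k = ?n"
        using \<open>k < ?n\<close> by simp
      then have "k = ?n - 1" "(k + 1) mod ?n = 0"
        by simp_all
      then show ?thesis using \<open>_ \<and> R (xs ! (?n - 1)) (xs ! 0)\<close> by simp
    qed simp
  qed
  with False show ?thesis
    by (simp add: cycle_list_def successively_conv_nth last_conv_nth hd_conv_nth)
qed (simp add: cycle_list_def)

lemma cycle_list_rotate1: "cycle_list R xs \<Longrightarrow> cycle_list R (rotate1 xs)"
proof (cases xs)
  case (Cons x ys)
  assume "cycle_list R xs"
  then have "ys \<noteq> []" "R (last ys) x" "R x (hd ys)"
    using Cons by (auto simp: cycle_list_iff_successively successively_Cons split: if_splits)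
  with \<open>cycle_list R xs\<close> show ?thesis
    using Cons by (auto simp: cycle_list_iff_successively successively_append_iff successively_Cons)
qed simp

lemma cycle_list_rotate: "cycle_list R xs \<Longrightarrow> cycle_list R (rotate k xs)"
  by (induction k) (simp_all add: cycle_list_rotate1)

lemma cycle_list_rotate_to:
  assumes c: "cycle_list R c" and "x \<in> set c"
  obtains ys where "cycle_list R (x # ys)" "set (x # ys) = set c"
proof -
  obtain k where "k < length c" "c ! k = x"
    using \<open>x \<in> set c\<close> by (auto simp: in_set_conv_nth)
  then have "hd (rotate k c) = x"
    by (metis hd_rotate_conv_nth list.size(3) mod_less not_less_zero)
  moreover have "rotate k c \<noteq> []"
    using \<open>x \<in> set c\<close> by auto
  ultimately have "rotate k c = x # tl (rotate k c)"
    by (metis list.collapse)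
  then show ?thesis
    using that cycle_list_rotate[OF c, of k] set_rotate[of k c] by metis
qed

lemma cycle_list_Cons_iff:
  "cycle_list R (x # ys) \<longleftrightarrow>
     2 \<le> length ys \<and> distinct (x # ys) \<and> successively R ys \<and> R x (hd ys) \<and> R (last ys) x"
  by (cases ys) (auto simp: cycle_list_iff_successively successively_Cons)

definition cycle_adj :: "'a list \<Rightarrow> 'a \<Rightarrow> 'a \<Rightarrow> bool" where
  "cycle_adj Z x y \<longleftrightarrow> (\<exists>k<length Z. {x, y} = {Z ! k, Z ! ((k + 1) mod length Z)})"

lemma cycle_adj_sym: "cycle_adj Z x y \<longleftrightarrow> cycle_adj Z y x"
  by (simp add: cycle_adj_def insert_commute)

lemma cycle_adj_in_set:
  assumes "cycle_adj Z x y"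
  shows "x \<in> set Z"
proof -
  obtain k where k: "k < length Z" and "x \<in> {Z ! k, Z ! ((k + 1) mod length Z)}"
    using assms unfolding cycle_adj_def by (metis insertI1)
  moreover have "(k + 1) mod length Z < length Z"
    using k by (cases Z) simp_all
  ultimately show ?thesis
    by auto
qed

lemma cycle_adj_iff:
  assumes "distinct Z" "j < length Z"
  shows "cycle_adj Z (Z ! j) y \<longleftrightarrow>
    y = Z ! ((j + 1) mod length Z) \<or> y = Z ! ((j + length Z - 1) mod length Z)"
    (is "_ \<longleftrightarrow> y = Z ! ?succ \<or> y = Z ! ?pred")
proof
  assume "cycle_adj Z (Z ! j) y"
  then obtain k where k: "k < length Z"
    and "Z ! j = Z ! k \<and> y = Z ! ((k + 1) mod length Z) \<or>
         Z ! j = Z ! ((k + 1) mod length Z) \<and> y = Z ! k"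
    unfolding cycle_adj_def doubleton_eq_iff by blast
  moreover have "(k + 1) mod length Z < length Z"
    using k by (cases Z) simp_all
  ultimately consider "k = j" "y = Z ! ?succ" | "(k + 1) mod length Z = j" "y = Z ! k"
    using assms by (auto simp: nth_eq_iff_index_eq)
  then show "y = Z ! ?succ \<or> y = Z ! ?pred"
    by cases (use k assms add_one_mod_eq_iff in auto)
next
  have pred: "?pred < length Z"
    using assms(2) by (cases Z) simp_all
  then have pred_succ: "(?pred + 1) mod length Z = j"
    using assms(2) add_one_mod_eq_iff by blast
  assume "y = Z ! ?succ \<or> y = Z ! ?pred"
  then show "cycle_adj Z (Z ! j) y"
  proof
    assume "y = Z ! ?succ"
    then show ?thesis
      unfolding cycle_adj_def using assms(2) by blast
  next
    assume "y = Z ! ?pred"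
    then have "{Z ! j, y} = {Z ! ?pred, Z ! ((?pred + 1) mod length Z)}"
      using pred_succ by (simp add: insert_commute)
    then show ?thesis
      unfolding cycle_adj_def using pred by blast
  qed
qed

lemma set_subset_if_cyclic_succ_closed:
  assumes "j0 < length Z" "Z ! j0 \<in> A"
    and closed: "\<And>j. j < length Z \<Longrightarrow> Z ! j \<in> A \<Longrightarrow> Z ! ((j + 1) mod length Z) \<in> A"
  shows "set Z \<subseteq> A"
proof
  let ?n = "length Z"
  have orbit: "Z ! ((j0 + k) mod ?n) \<in> A" for k
  proof (induction k)
    case (Suc k)
    have "0 < ?n"
      using assms(1) by linarith
    with Suc closed[of "(j0 + k) mod ?n"] show ?case
      by (simp add: mod_Suc_eq)
  qed (use assms in simp)
  fix x
  assume "x \<in> set Z"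
  then obtain j where "j < ?n" "Z ! j = x"
    by (auto simp: in_set_conv_nth)
  moreover have "(j0 + (j + ?n - j0)) mod ?n = j"
    using \<open>j < ?n\<close> assms(1) by simp
  ultimately show "x \<in> A"
    using orbit[of "j + ?n - j0"] by simp
qed

lemma cycle_list_cycle_adj_succ:
  assumes Z: "distinct Z" and c: "cycle_list (cycle_adj Z) c"
    and j: "j < length Z" "Z ! j \<in> set c"
  shows "Z ! ((j + 1) mod length Z) \<in> set c"
proof -
  let ?n = "length Z"
  obtain ys where "cycle_list (cycle_adj Z) (Z ! j # ys)" and set_ys: "set (Z ! j # ys) = set c"
    using cycle_list_rotate_to[OF c j(2)] .
  then have "2 \<le> length ys" "distinct ys" "cycle_adj Z (Z ! j) (hd ys)" "cycle_adj Z (last ys) (Z ! j)"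
    by (simp_all add: cycle_list_Cons_iff)
  then have "hd ys \<noteq> last ys" "cycle_adj Z (Z ! j) (hd ys)" "cycle_adj Z (Z ! j) (last ys)"
    by (simp_all add: hd_neq_last cycle_adj_sym)
  then have "hd ys = Z ! ((j + 1) mod ?n) \<or> hd ys = Z ! ((j + ?n - 1) mod ?n)"
    "last ys = Z ! ((j + 1) mod ?n) \<or> last ys = Z ! ((j + ?n - 1) mod ?n)"
    by (simp_all add: cycle_adj_iff[OF Z j(1)])
  with \<open>hd ys \<noteq> last ys\<close> have "Z ! ((j + 1) mod ?n) \<in> {hd ys, last ys}"
    by (metis insert_iff)
  moreover have "{hd ys, last ys} \<subseteq> set (Z ! j # ys)"
    using \<open>2 \<le> length ys\<close> by (cases ys) auto
  ultimately show ?thesis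
    using set_ys by blast
qed

lemma cycle_list_cycle_adj_set_eq:
  assumes Z: "distinct Z" and c: "cycle_list (cycle_adj Z) c"
  shows "set c = set Z"
proof
  show sub: "set c \<subseteq> set Z"
  proof
    fix x
    assume "x \<in> set c"
    then obtain i where "i < length c" "x = c ! i"
      by (auto simp: in_set_conv_nth)
    with c have "cycle_adj Z x (c ! ((i + 1) mod length c))"
      by (simp add: cycle_list_def)
    then show "x \<in> set Z"
      by (rule cycle_adj_in_set)
  qed
  have "c \<noteq> []"
    using c by (auto simp: cycle_list_def)
  then have hd_c: "hd c \<in> set c"
    by (rule hd_in_set)
  with sub obtain j0 where "j0 < length Z" "Z ! j0 = hd c"
    by (metis in_set_conv_nth subsetD)
  with hd_c show "set Z \<subseteq> set c"
    using set_subset_if_cyclic_succ_closed cycle_list_cycle_adj_succ[OF Z c] by metis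
qed

lemma dir_cycle_through_arc:
  assumes uv: "(u, v) \<in> E" and "R \<subseteq> E" and "(v, u) \<in> R\<^sup>*" and "(v, u) \<notin> R" and "u \<noteq> v"
  shows "\<exists>cy. cycle_list (dir_adj E) cy \<and> u \<in> set cy \<and> v \<in> set cy"
proof -
  have "(\<lambda>a b. (a, b) \<in> R)\<^sup>*\<^sup>* v u"
    using \<open>(v, u) \<in> R\<^sup>*\<close> by (simp add: rtranclp_rtrancl_eq)
  then obtain xs where "rtrancl_path (\<lambda>a b. (a, b) \<in> R) v xs u"
    by (auto simp: rtranclp_eq_rtrancl_path)
  then obtain xs where path: "rtrancl_path (\<lambda>a b. (a, b) \<in> R) v xs u" and "distinct (v # xs)"
    by (rule rtrancl_path_distinct)
  have succ: "successively (\<lambda>a b. (a, b) \<in> R) (v # xs)" and last: "last (v # xs) = u"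
    using rtrancl_path_successively[OF path] by simp_all
  have "2 \<le> length xs"
  proof (rule ccontr)
    assume "\<not> 2 \<le> length xs"
    then consider "xs = []" | y where "xs = [y]"
      by (cases xs) (auto simp: Suc_le_eq)
    then show False
    proof cases
      case 1
      then show False using last \<open>u \<noteq> v\<close> by simp
    next
      case (2 y)
      then show False using succ last \<open>(v, u) \<notin> R\<close> by simp
    qed
  qed
  moreover have "successively (dir_adj E) (v # xs)"
    using succ by (rule successively_mono) (use \<open>R \<subseteq> E\<close> in \<open>auto simp: dir_adj_def\<close>)
  ultimately have "cycle_list (dir_adj E) (v # xs)"
    using \<open>distinct (v # xs)\<close> last uv by (simp add: cycle_list_iff_successively dir_adj_def)
  moreover have "u \<in> set (v # xs)"
    using last last_in_set[of "v # xs"] by simp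
  ultimately show ?thesis
    by auto
qed

lemma dir_cycle_through_one_way_arc:
  assumes "digraph V E" "strongly_connected V E" "(b, a) \<in> E" "(a, b) \<notin> E"
  shows "\<exists>cy. cycle_list (dir_adj E) cy \<and> a \<in> set cy \<and> b \<in> set cy"
proof -
  have "a \<in> V" "b \<in> V" "b \<noteq> a"
    using assms(1,3) unfolding digraph_def by auto
  then have "(a, b) \<in> E\<^sup>*"
    using assms(2) unfolding strongly_connected_def by auto
  with dir_cycle_through_arc[OF assms(3) subset_refl _ assms(4) \<open>b \<noteq> a\<close>] show ?thesis
    by blast
qed

lemma dir_cycle_of_und_cycle:
  assumes "digraph V E" "strongly_connected V E" "cycle_list (und_adj E) c"
  shows "\<exists>cy. cycle_list (dir_adj E) cy"
proof (cases "cycle_list (dir_adj E) c")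
  case False
  then obtain k where "k < length c" "(c ! k, c ! ((k + 1) mod length c)) \<notin> E"
    using assms(3) by (auto simp: cycle_list_def dir_adj_def)
  moreover from this have "(c ! ((k + 1) mod length c), c ! k) \<in> E"
    using assms(3) by (auto simp: cycle_list_def und_adj_def)
  ultimately show ?thesis
    using dir_cycle_through_one_way_arc[OF assms(1,2)] by blast
qed blast

lemma dir_cycle_rtrancl:
  assumes Z: "cycle_list (dir_adj E) Z" and "a \<in> set Z" "b \<in> set Z"
  shows "(a, b) \<in> (E \<inter> set Z \<times> set Z)\<^sup>*"
proof -
  obtain ys where "cycle_list (dir_adj E) (a # ys)" and set_ys: "set (a # ys) = set Z"
    using cycle_list_rotate_to[OF Z \<open>a \<in> set Z\<close>] .
  then have "successively (dir_adj E) (a # ys)"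
    by (simp add: cycle_list_iff_successively)
  then have "successively (\<lambda>x y. (x, y) \<in> (E \<inter> set Z \<times> set Z)\<^sup>*) (a # ys)"
    by (rule successively_mono) (use set_ys in \<open>auto simp: dir_adj_def\<close>)
  moreover have "b \<in> set (a # ys)"
    using \<open>b \<in> set Z\<close> set_ys by blast
  ultimately show ?thesis
    using successively_rtrancl by fastforce
qed

lemma cycle_list_take:
  assumes xs: "cycle_list R xs" and "2 \<le> m" "m < length xs" and "R (xs ! m) (hd xs)"
  shows "cycle_list R (take (m + 1) xs)"
  unfolding cycle_list_iff_successively
proof (intro conjI)
  show "3 \<le> length (take (m + 1) xs)" "distinct (take (m + 1) xs)"
    using assms by (simp_all add: cycle_list_def)
  show "successively R (take (m + 1) xs)"
    using xs by (simp add: cycle_list_iff_successively successively_take)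
  have "last (take (m + 1) xs) = xs ! m"
    using assms by (simp add: take_Suc_conv_app_nth)
  then show "R (last (take (m + 1) xs)) (hd (take (m + 1) xs))"
    using assms by simp
qed

lemma dir_cycle_chord:
  assumes Z: "cycle_list (dir_adj E) Z" and "p \<in> set Z" "q \<in> set Z"
    and "(p, q) \<in> E" "p \<noteq> q" and chord: "\<not> cycle_adj Z q p"
  shows "\<exists>cy. cycle_list (dir_adj E) cy \<and> set cy \<noteq> set Z"
proof -
  let ?n = "length Z"
  have n: "3 \<le> ?n" and "distinct Z"
    using Z by (auto simp: cycle_list_def)
  obtain a where a: "a < ?n" "Z ! a = q"
    using \<open>q \<in> set Z\<close> by (auto simp: in_set_conv_nth)
  define Z' where "Z' = rotate a Z"
  have Z': "cycle_list (dir_adj E) Z'" "length Z' = ?n" "distinct Z'" "set Z' = set Z"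
    using cycle_list_rotate[OF Z] \<open>distinct Z\<close> by (simp_all add: Z'_def)
  have Z'_nth: "Z' ! i = Z ! ((a + i) mod ?n)" if "i < ?n" for i
    using that by (simp add: Z'_def nth_rotate)
  obtain m where m: "m < ?n" "Z' ! m = p"
    using \<open>p \<in> set Z\<close> Z' by (metis in_set_conv_nth)
  have "Z \<noteq> []" "Z' \<noteq> []"
    using Z'(2) n by auto
  then have hd_Z': "hd Z' = Z' ! 0"
    by (simp add: hd_conv_nth)
  have "Z' ! 0 = q"
    using Z'_nth[of 0] a \<open>Z \<noteq> []\<close> by simp
  then have "m \<noteq> 0"
    using m(2) \<open>p \<noteq> q\<close> by (intro notI) simp
  moreover have "m \<noteq> 1" "m \<noteq> ?n - 1"
  proof -
    have "Z' ! 1 = Z ! ((a + 1) mod ?n)" "Z' ! (?n - 1) = Z ! ((a + ?n - 1) mod ?n)"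
      using Z'_nth[of 1] Z'_nth[of "?n - 1"] n by simp_all
    then show "m \<noteq> 1" "m \<noteq> ?n - 1"
      using m chord cycle_adj_iff[OF \<open>distinct Z\<close> \<open>a < ?n\<close>] a(2) by auto
  qed
  ultimately have m_bounds: "2 \<le> m" "m + 1 < ?n"
    using m by auto
  define cy where "cy = take (m + 1) Z'"
  have "cycle_list (dir_adj E) cy"
    unfolding cy_def using Z'(1,2) m_bounds m(2) hd_Z' \<open>Z' ! 0 = q\<close> \<open>(p, q) \<in> E\<close>
    by (intro cycle_list_take) (simp_all add: dir_adj_def)
  moreover have "Z' ! (?n - 1) \<notin> set cy"
    using m_bounds Z' by (auto simp: cy_def in_set_conv_nth nth_eq_iff_index_eq)
  moreover have "Z' ! (?n - 1) \<in> set Z"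
    using Z' n nth_mem[of "?n - 1" Z'] by simp
  ultimately show ?thesis
    by blast
qed

lemma und_path_rtrancl_avoiding:
  assumes Z: "cycle_list (dir_adj E) Z"
    and one_way: "\<And>a b. (a, b) \<in> E \<Longrightarrow> (b, a) \<notin> E \<Longrightarrow> a \<in> set Z \<and> b \<in> set Z"
    and path: "successively (und_adj E) ys" "ys \<noteq> []"
    and "w \<notin> set ys" "w \<notin> set Z"
  shows "(hd ys, last ys) \<in> (E \<inter> (- {w}) \<times> (- {w}))\<^sup>*"
proof -
  let ?R = "E \<inter> (- {w}) \<times> (- {w})"
  have "successively (\<lambda>x y. (x, y) \<in> ?R\<^sup>*) ys"
  proof (rule successively_mono[OF path(1)])
    fix x y
    assume "x \<in> set ys" "y \<in> set ys" "und_adj E x y"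
    show "(x, y) \<in> ?R\<^sup>*"
    proof (cases "(x, y) \<in> E")
      case True
      then show ?thesis
        using \<open>x \<in> set ys\<close> \<open>y \<in> set ys\<close> \<open>w \<notin> set ys\<close> by auto
    next
      case False
      with \<open>und_adj E x y\<close> have "x \<in> set Z" "y \<in> set Z"
        using one_way unfolding und_adj_def by blast+
      then have "(x, y) \<in> (E \<inter> set Z \<times> set Z)\<^sup>*"
        by (rule dir_cycle_rtrancl[OF Z])
      moreover have "E \<inter> set Z \<times> set Z \<subseteq> ?R"
        using \<open>w \<notin> set Z\<close> by auto
      ultimately show ?thesis
        using rtrancl_mono by blast
    qed
  qed
  then show ?thesis
    using successively_rtrancl[of _ ys "last ys"] path(2) by simp
qed

lemma dir_cycle_through_und_cycle_vertex:
  assumes Z: "cycle_list (dir_adj E) Z"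
    and one_way: "\<And>a b. (a, b) \<in> E \<Longrightarrow> (b, a) \<notin> E \<Longrightarrow> a \<in> set Z \<and> b \<in> set Z"
    and c: "cycle_list (und_adj E) c" and "w \<in> set c" "w \<notin> set Z"
  shows "\<exists>cy. cycle_list (dir_adj E) cy \<and> w \<in> set cy"
proof -
  obtain ys where "cycle_list (und_adj E) (w # ys)"
    using cycle_list_rotate_to[OF c \<open>w \<in> set c\<close>] .
  then have "2 \<le> length ys" "w \<notin> set ys" "distinct ys" and path: "successively (und_adj E) ys"
    and "und_adj E w (hd ys)" "und_adj E (last ys) w"
    by (simp_all add: cycle_list_Cons_iff)
  then have "ys \<noteq> []"
    by auto
  define v a where "v = hd ys" and "a = last ys"
  have "w \<noteq> v"
    using \<open>ys \<noteq> []\<close> \<open>w \<notin> set ys\<close> by (auto simp: v_def)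
  have "v \<noteq> a"
    using \<open>2 \<le> length ys\<close> \<open>distinct ys\<close> by (simp add: v_def a_def hd_neq_last)
  have two_way: "(w, x) \<in> E \<and> (x, w) \<in> E" if "und_adj E w x" for x
    using that one_way[of w x] one_way[of x w] \<open>w \<notin> set Z\<close> unfolding und_adj_def by blast
  have "und_adj E w v" "und_adj E w a"
    using \<open>und_adj E w (hd ys)\<close> \<open>und_adj E (last ys) w\<close> by (auto simp: v_def a_def und_adj_def)
  then have wv: "(w, v) \<in> E" and aw: "(a, w) \<in> E"
    using two_way by blast+
  define R where "R = E - {(v, w)}"
  from path have "(v, a) \<in> (E \<inter> (- {w}) \<times> (- {w}))\<^sup>*"
    unfolding v_def a_def
    using Z one_way \<open>ys \<noteq> []\<close> \<open>w \<notin> set ys\<close> \<open>w \<notin> set Z\<close> by (intro und_path_rtrancl_avoiding)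
  moreover have "E \<inter> (- {w}) \<times> (- {w}) \<subseteq> R"
    by (auto simp: R_def)
  ultimately have "(v, a) \<in> R\<^sup>*"
    using rtrancl_mono by blast
  moreover have "(a, w) \<in> R"
    using aw \<open>v \<noteq> a\<close> by (auto simp: R_def)
  ultimately have "(v, w) \<in> R\<^sup>*"
    by (rule rtrancl_into_rtrancl)
  moreover have "(v, w) \<notin> R" "R \<subseteq> E"
    by (auto simp: R_def)
  ultimately show ?thesis
    using dir_cycle_through_arc[OF wv] \<open>w \<noteq> v\<close> by blast
qed

lemma dir_cycle_of_und_cycle_inside:
  assumes Z: "cycle_list (dir_adj E) Z"
    and c: "cycle_list (und_adj E) c" and "set c \<subseteq> set Z" "set c \<noteq> set Z"
  shows "\<exists>cy. cycle_list (dir_adj E) cy \<and> set cy \<noteq> set Z"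
proof -
  have "distinct Z"
    using Z by (simp add: cycle_list_def)
  then have "\<not> cycle_list (cycle_adj Z) c"
    using cycle_list_cycle_adj_set_eq \<open>set c \<noteq> set Z\<close> by blast
  then obtain k where k: "k < length c"
    and not_adj: "\<not> cycle_adj Z (c ! k) (c ! ((k + 1) mod length c))"
    using c by (auto simp: cycle_list_def)
  define p q where "p = c ! k" and "q = c ! ((k + 1) mod length c)"
  have chord: "\<not> cycle_adj Z p q" "\<not> cycle_adj Z q p"
    using not_adj cycle_adj_sym[of Z q p] by (simp_all add: p_def q_def)
  have "(k + 1) mod length c \<noteq> k"
  proof (cases "k + 1 < length c")
    case False
    with k have "k + 1 = length c"
      by simp
    moreover have "3 \<le> length c"
      using c by (simp add: cycle_list_def)
    ultimately show ?thesis
      by simp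
  qed simp
  moreover have "(k + 1) mod length c < length c"
    using k by (cases c) simp_all
  ultimately have "p \<in> set Z" "q \<in> set Z" "p \<noteq> q"
    using k c \<open>set c \<subseteq> set Z\<close> unfolding p_def q_def cycle_list_def
    by (auto simp: nth_eq_iff_index_eq)
  moreover have "(p, q) \<in> E \<or> (q, p) \<in> E"
    using c k by (simp add: p_def q_def cycle_list_def und_adj_def)
  ultimately show ?thesis
    using dir_cycle_chord[OF Z] chord by blast
qed

theorem lemma2p5:
  fixes V :: "'a set" and E :: "('a \<times> 'a) set"
  assumes "digraph V E"
    and "strongly_connected V E"
    and "\<exists>c1 c2. cycle_list (und_adj E) c1 \<and> cycle_list (und_adj E) c2 \<and> set c1 \<noteq> set c2"
  shows "\<exists>c1 c2. cycle_list (dir_adj E) c1 \<and> cycle_list (dir_adj E) c2 \<and> set c1 \<noteq> set c2"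
proof (rule ccontr)
  assume "\<not> ?thesis"
  then have same: "set cy = set Z" if "cycle_list (dir_adj E) cy" "cycle_list (dir_adj E) Z" for cy Z
    using that by blast
  obtain c1 c2 where c12: "cycle_list (und_adj E) c1" "cycle_list (und_adj E) c2" "set c1 \<noteq> set c2"
    using assms(3) by blast
  obtain Z where Z: "cycle_list (dir_adj E) Z"
    using dir_cycle_of_und_cycle[OF assms(1,2) c12(1)] by blast
  obtain c where c: "cycle_list (und_adj E) c" and "set c \<noteq> set Z"
    using c12 by metis
  have one_way: "a \<in> set Z \<and> b \<in> set Z" if "(a, b) \<in> E" "(b, a) \<notin> E" for a b
    using dir_cycle_through_one_way_arc[OF assms(1,2) that] same[OF _ Z] by blast
  show False
  proof (cases "set c \<subseteq> set Z")
    case True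
    then show False
      using dir_cycle_of_und_cycle_inside[OF Z c _ \<open>set c \<noteq> set Z\<close>] same[OF _ Z] by blast
  next
    case False
    then obtain w where "w \<in> set c" "w \<notin> set Z"
      by blast
    then show False
      using dir_cycle_through_und_cycle_vertex[OF Z one_way c] same[OF _ Z] by blast
  qed
qed

end
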